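(* Let $(\lambda_k)_{k\ge0}$ be a sequence of positive numbers, $\tau_0=0$ and $\tau_k=\sum_{i=0}^{k-1}\lambda_i$ for $k\ge1$. Suppose there exist $C_2>0$ and $a,b,c\ge0$ with $b+c>a$ such that $$\sum_{k\ge0}\tau_k^a\lambda_k^{-b}\lambda_{k+1}^{-c}\le C_2<+\infty$$ (with the convention $\tau_0^0=1$). Then there exists $C_3>0$ such that $\tau_{k+1}\ge C_3\,k^{\frac{b+c+1}{b+c-a}}$ for every $k\ge1$. *)

theory Defs
  imports "HOL-Analysis.Analysis"
begin

definition tau :: "(nat \<Rightarrow> real) \<Rightarrow> nat \<Rightarrow> real" where
  "tau lam k = (\<Sum>i<k. lam i)"

definition pw :: "real \<Rightarrow> real \<Rightarrow> real" where
  "pw x a = (if a = 0 then 1 else x powr a)"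

end

theory Submission imports Defs begin

text \<open>Write \<open>s = b + c\<close>. On a block \<open>m \<le> i < j\<close> each summand of the series is at least
  \<open>\<tau>(m)^a (\<lambda>(i) + \<lambda>(i+1))^(-s)\<close>, and these gaps add up to at most \<open>2 \<tau>(j+1)\<close>; so Jensen's
  inequality for \<open>x^(-s)\<close> turns the bound \<open>C\<^sub>2\<close> on the series into
  \<open>\<tau>(m)^a (j - m)^(1+s) \<le> C\<^sub>2 (2 \<tau>(j+1))^s\<close>. With \<open>m = k div 2\<close> and \<open>j = k - 1\<close> this says that
  \<open>\<tau>(k)^s\<close> dominates a constant times \<open>\<tau>(k div 2)^a k^(1+s)\<close>, and a strong induction on \<open>k\<close>
  propagates \<open>\<tau>(k) \<ge> C k^p\<close> exactly when \<open>p a + 1 + s = p s\<close>.\<close>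

lemma powr_neg_ge_tangent:
  fixes s x M :: real
  assumes "s \<ge> 0" "x > 0" "M > 0"
  shows "M powr (-s) - s * M powr (-s-1) * (x - M) \<le> x powr (-s)"
proof -
  have "(- s * M powr (-s-1)) * (x - M) \<le> x powr (-s) - M powr (-s)"
  proof (rule f''_imp_f'[where C="{0<..}" and f="\<lambda>x. x powr (-s)"
        and f'="\<lambda>x. - s * x powr (-s-1)" and f''="\<lambda>x. s * (s+1) * x powr (-s-2)"])
    show "((\<lambda>x. x powr (-s)) has_real_derivative - s * x powr (-s-1)) (at x)" if "x \<in> {0<..}" for x
      using that by (auto intro!: derivative_eq_intros)
    show "((\<lambda>x. - s * x powr (-s-1)) has_real_derivative s * (s+1) * x powr (-s-2)) (at x)"
      if "x \<in> {0<..}" for x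
      using that by (auto intro!: derivative_eq_intros simp: algebra_simps)
  qed (use assms in auto)
  then show ?thesis by (simp add: algebra_simps)
qed

text \<open>Jensen's inequality for the convex function \<open>x^(-s)\<close> (via its tangent at the mean), with the
  denominators cleared.\<close>
lemma card_powr_le_sum_mult_sum_powr_neg:
  fixes u :: "'i \<Rightarrow> real" and s :: real
  assumes "finite I" "I \<noteq> {}" "\<And>i. i \<in> I \<Longrightarrow> u i > 0" "s \<ge> 0"
  shows "real (card I) powr (1 + s) \<le> (\<Sum>i\<in>I. u i) powr s * (\<Sum>i\<in>I. u i powr (-s))"
proof -
  define n where "n = real (card I)"
  define S where "S = (\<Sum>i\<in>I. u i)"
  define M where "M = S / n"
  have n0: "n > 0" using assms by (simp add: n_def card_gt_0_iff)
  have S0: "S > 0" unfolding S_def using assms by (intro sum_pos) auto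
  have M0: "M > 0" using n0 S0 by (simp add: M_def)
  have "n powr (1 + s) * S powr (-s) = n * M powr (-s) - s * M powr (-s-1) * (S - n * M)"
    using n0 S0 by (simp add: M_def powr_divide powr_add powr_minus field_simps)
  also have "\<dots> = (\<Sum>i\<in>I. M powr (-s) - s * M powr (-s-1) * (u i - M))"
    by (simp add: sum_subtractf sum_distrib_left[symmetric] sum_distrib_right[symmetric]
        S_def n_def algebra_simps)
  also have "\<dots> \<le> (\<Sum>i\<in>I. u i powr (-s))"
    using assms M0 by (intro sum_mono powr_neg_ge_tangent) auto
  finally have "n powr (1 + s) * S powr (-s) \<le> (\<Sum>i\<in>I. u i powr (-s))" .
  then have "n powr (1 + s) * S powr (-s) * S powr s \<le> S powr s * (\<Sum>i\<in>I. u i powr (-s))"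
    by (simp add: mult.commute mult_left_mono)
  then show ?thesis
    using S0 by (simp add: n_def S_def powr_minus field_simps)
qed

lemma tau_mono:
  assumes "\<And>k. lam k \<ge> 0" "i \<le> j"
  shows "tau lam i \<le> tau lam j"
  unfolding tau_def using assms by (intro sum_mono2) auto

lemma tau_ge_first:
  assumes "\<And>k. lam k \<ge> 0" "k \<ge> 1"
  shows "lam 0 \<le> tau lam k"
  using tau_mono[OF assms] by (simp add: tau_def)

lemma sum_consecutive_le_tau:
  assumes "\<And>k. lam k \<ge> 0"
  shows "(\<Sum>i\<in>{m..<j}. lam i + lam (Suc i)) \<le> 2 * tau lam (Suc j)"
proof -
  have "(\<Sum>i\<in>{m..<j}. lam i) \<le> tau lam (Suc j)"
    unfolding tau_def using assms by (intro sum_mono2) auto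
  moreover have "(\<Sum>i\<in>{m..<j}. lam (Suc i)) = (\<Sum>i\<in>{Suc m..<Suc j}. lam i)"
    by (rule sum.shift_bounds_Suc_ivl[symmetric])
  moreover have "(\<Sum>i\<in>{Suc m..<Suc j}. lam i) \<le> tau lam (Suc j)"
    unfolding tau_def using assms by (intro sum_mono2) auto
  ultimately show ?thesis by (simp add: sum.distrib)
qed

lemma summand_lower_bound:
  assumes pos: "\<And>k. lam k > 0" and "a \<ge> 0" "b \<ge> 0" "c \<ge> 0" "1 \<le> m" "m \<le> i"
  shows "tau lam m powr a * (lam i + lam (Suc i)) powr (-(b + c))
    \<le> pw (tau lam i) a * lam i powr (-b) * lam (Suc i) powr (-c)"
proof -
  define u where "u = lam i + lam (Suc i)"
  have u: "lam i \<le> u" "lam (Suc i) \<le> u" using pos[of i] pos[of "Suc i"] by (auto simp: u_def)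
  have tau_pos: "tau lam k > 0" if "k \<ge> 1" for k
    using tau_ge_first[of lam k] pos that by (meson less_imp_le order_less_le_trans)
  have "pw (tau lam i) a = tau lam i powr a"
    using tau_pos[of i] assms by (simp add: pw_def)
  moreover have "tau lam m powr a \<le> tau lam i powr a"
    using tau_pos[of m] assms tau_mono[of lam m i] pos by (intro powr_mono2) (auto intro: less_imp_le)
  moreover have "u powr (-b) \<le> lam i powr (-b)" "u powr (-c) \<le> lam (Suc i) powr (-c)"
    using u pos[of i] pos[of "Suc i"] assms by (auto intro: powr_mono2')
  moreover have "u powr (-(b + c)) = u powr (-b) * u powr (-c)"
    by (simp add: powr_add[symmetric])
  ultimately show ?thesis
    unfolding u_def[symmetric] by (simp add: mult_mono mult.assoc)
qed

lemma tau_block_bound: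
  fixes lam :: "nat \<Rightarrow> real" and a b c C2 :: real
  assumes pos: "\<And>k. lam k > 0" and "a \<ge> 0" "b \<ge> 0" "c \<ge> 0"
    and summ: "summable (\<lambda>k. pw (tau lam k) a * lam k powr (-b) * lam (Suc k) powr (-c))"
    and bound: "(\<Sum>k. pw (tau lam k) a * lam k powr (-b) * lam (Suc k) powr (-c)) \<le> C2"
    and "1 \<le> m" "m < j"
  shows "tau lam m powr a * real (j - m) powr (1 + (b + c)) \<le> C2 * (2 * tau lam (Suc j)) powr (b + c)"
proof -
  define s where "s = b + c"
  define u where "u i = lam i + lam (Suc i)" for i
  define f where "f = (\<lambda>k. pw (tau lam k) a * lam k powr (-b) * lam (Suc k) powr (-c))"
  have upos: "u i > 0" for i using pos[of i] pos[of "Suc i"] by (simp add: u_def)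
  have "tau lam m powr a * real (j - m) powr (1 + s)
      \<le> tau lam m powr a * ((\<Sum>i\<in>{m..<j}. u i) powr s * (\<Sum>i\<in>{m..<j}. u i powr (-s)))"
    using card_powr_le_sum_mult_sum_powr_neg[of "{m..<j}" u s] assms upos
    by (intro mult_left_mono) (auto simp: s_def)
  also have "\<dots> = (\<Sum>i\<in>{m..<j}. u i) powr s * (\<Sum>i\<in>{m..<j}. tau lam m powr a * u i powr (-s))"
    by (simp add: sum_distrib_left mult_ac)
  also have "\<dots> \<le> (2 * tau lam (Suc j)) powr s * sum f {m..<j}"
  proof (rule mult_mono)
    show "(\<Sum>i\<in>{m..<j}. u i) powr s \<le> (2 * tau lam (Suc j)) powr s"
      using sum_consecutive_le_tau[of lam m j] pos upos assms
      by (intro powr_mono2) (auto simp: s_def u_def intro: less_imp_le sum_nonneg)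
    show "(\<Sum>i\<in>{m..<j}. tau lam m powr a * u i powr (-s)) \<le> sum f {m..<j}"
      using summand_lower_bound[of lam a b c m] assms
      by (intro sum_mono) (auto simp: s_def u_def f_def)
  qed (auto intro: sum_nonneg)
  also have "\<dots> \<le> (2 * tau lam (Suc j)) powr s * C2"
  proof (rule mult_left_mono)
    have "sum f {m..<j} \<le> suminf f"
      using summ unfolding f_def by (intro sum_le_suminf) (auto simp: pw_def)
    then show "sum f {m..<j} \<le> C2" using bound by (simp add: f_def)
  qed simp
  finally show ?thesis by (simp add: s_def mult.commute)
qed

text \<open>One step of the induction, with \<open>x = k\<close>, \<open>y = k div 2\<close> and \<open>z = k - 1 - k div 2\<close> (for \<open>k \<ge> 4\<close>).\<close>
lemma powr_growth_step:
  fixes a s p C K x y z Tm Tk :: real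
  assumes "0 \<le> a" "a < s" "C > 0" "x > 0" "p = (s + 1) / (s - a)"
    and small: "C powr (s - a) * (K * 3 powr (p * a) * 4 powr (1 + s)) \<le> 1"
    and "x / 3 \<le> y" "x / 4 \<le> z"
    and IH: "C * y powr p \<le> Tm"
    and block: "Tm powr a * z powr (1 + s) \<le> K * Tk powr s"
    and "Tk > 0"
  shows "C * x powr p \<le> Tk"
proof -
  have p0: "p > 0" using assms by simp
  have pid: "p * a + (1 + s) = p * s" using assms by (simp add: field_simps)
  have "C powr a * (x / 3) powr (p * a) = (C * (x / 3) powr p) powr a"
    using assms by (simp add: powr_mult powr_powr)
  also have "\<dots> \<le> Tm powr a"
  proof (rule powr_mono2)
    have "C * (x / 3) powr p \<le> C * y powr p"
      using assms p0 by (intro mult_left_mono powr_mono2) auto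
    then show "C * (x / 3) powr p \<le> Tm" using IH by linarith
  qed (use assms in auto)
  finally have weight: "C powr a * (x / 3) powr (p * a) \<le> Tm powr a" .
  have length: "(x / 4) powr (1 + s) \<le> z powr (1 + s)"
    using assms by (intro powr_mono2) auto
  have x3: "x powr (p * a) = 3 powr (p * a) * (x / 3) powr (p * a)"
    using powr_mult[of 3 "x / 3" "p * a"] assms(4) by simp
  have x4: "x powr (1 + s) = 4 powr (1 + s) * (x / 4) powr (1 + s)"
    using powr_mult[of 4 "x / 4" "1 + s"] assms(4) by simp
  have "(C * x powr p) powr s = C powr (s - a) * C powr a * x powr (p * a) * x powr (1 + s)"
    using assms(3,4) by (simp add: powr_mult powr_powr powr_add[symmetric] pid)
  also have "\<dots> = C powr (s - a) * 3 powr (p * a) * 4 powr (1 + s)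
      * (C powr a * (x / 3) powr (p * a) * (x / 4) powr (1 + s))"
    unfolding x3 x4 by (simp only: mult_ac)
  also have "\<dots> \<le> C powr (s - a) * 3 powr (p * a) * 4 powr (1 + s) * (Tm powr a * z powr (1 + s))"
    by (rule mult_left_mono[OF mult_mono[OF weight length]]) auto
  also have "\<dots> \<le> C powr (s - a) * 3 powr (p * a) * 4 powr (1 + s) * (K * Tk powr s)"
    using block by (intro mult_left_mono) auto
  also have "\<dots> \<le> Tk powr s"
    using small mult_right_mono[OF small, of "Tk powr s"] by (simp add: mult_ac)
  finally have le: "(C * x powr p) powr s \<le> Tk powr s" .
  show ?thesis
  proof (rule ccontr)
    assume "\<not> C * x powr p \<le> Tk"
    then have "Tk powr s < (C * x powr p) powr s"
      using assms by (intro powr_less_mono2) auto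
    then show False using le by linarith
  qed
qed

lemma powr_lower_bound_from_block_inequality:
  fixes T :: "nat \<Rightarrow> real" and a s K L :: real
  assumes "0 \<le> a" "a < s" "K > 0" "L > 0"
    and lower: "\<And>k. 1 \<le> k \<Longrightarrow> L \<le> T k"
    and block: "\<And>m j. 1 \<le> m \<Longrightarrow> m < j \<Longrightarrow>
      T m powr a * real (j - m) powr (1 + s) \<le> K * T (Suc j) powr s"
  shows "\<exists>C > 0. \<forall>k \<ge> 1. C * real k powr ((s + 1) / (s - a)) \<le> T k"
proof -
  define p where "p = (s + 1) / (s - a)"
  define B where "B = K * 3 powr (p * a) * 4 powr (1 + s)"
  define C where "C = min (L / 3 powr p) (B powr (- 1 / (s - a)))"
  have p0: "p > 0" and B0: "B > 0" using assms by (auto simp: p_def B_def)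
  have C0: "C > 0" using assms B0 by (simp add: C_def)
  have small: "C powr (s - a) * B \<le> 1"
  proof -
    have "C powr (s - a) \<le> (B powr (- 1 / (s - a))) powr (s - a)"
      using C0 assms by (intro powr_mono2) (auto simp: C_def)
    also have "\<dots> = B powr (- 1 / (s - a) * (s - a))" by (rule powr_powr)
    also have "\<dots> = 1 / B" using assms B0 by (simp add: powr_minus_divide)
    finally show ?thesis using B0 by (simp add: field_simps)
  qed
  have "C * real k powr p \<le> T k" if "k \<ge> 1" for k
    using that
  proof (induction k rule: less_induct)
    case (less k)
    show ?case
    proof (cases "k \<le> 3")
      case True
      have "C * real k powr p \<le> L / 3 powr p * 3 powr p"
        using True less.prems C0 p0 by (intro mult_mono powr_mono2) (auto simp: C_def)
      then show ?thesis using lower[OF less.prems] by simp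
    next
      case False
      define m where "m = k div 2"
      have m: "1 \<le> m" "m < k" "m < k - 1" using False by (auto simp: m_def)
      show ?thesis
      proof (rule powr_growth_step[OF assms(1,2) C0 _ p_def])
        show "C powr (s - a) * (K * 3 powr (p * a) * 4 powr (1 + s)) \<le> 1"
          using small by (simp add: B_def)
        show "real k / 3 \<le> real m" "real k / 4 \<le> real (k - 1 - m)"
          using False unfolding m_def by linarith+
        show "C * real m powr p \<le> T m" using less.IH[OF m(2,1)] .
        show "T m powr a * real (k - 1 - m) powr (1 + s) \<le> K * T k powr s"
          using block[OF m(1,3)] False by simp
        show "T k > 0" using lower[OF less.prems] assms by linarith
      qed (use False in auto)
    qed
  qed
  then show ?thesis using C0 unfolding p_def by blast
qed

theorem mainTheorem12:
  fixes lam :: "nat \<Rightarrow> real" and a b c C2 :: real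
  assumes pos: "\<And>k. lam k > 0"
    and C2pos: "C2 > 0"
    and abc: "a \<ge> 0" "b \<ge> 0" "c \<ge> 0" "b + c > a"
    and summ: "summable (\<lambda>k. pw (tau lam k) a * lam k powr (-b) * lam (Suc k) powr (-c))"
    and bound: "(\<Sum>k. pw (tau lam k) a * lam k powr (-b) * lam (Suc k) powr (-c)) \<le> C2"
  shows "\<exists>C3 > 0. \<forall>k \<ge> 1. tau lam (Suc k) \<ge> C3 * real k powr ((b + c + 1) / (b + c - a))"
proof -
  have nonneg: "\<And>k. lam k \<ge> 0" using pos less_imp_le by blast
  obtain C where "C > 0" and C: "\<And>k. k \<ge> 1 \<Longrightarrow> C * real k powr ((b + c + 1) / (b + c - a)) \<le> tau lam k"
  proof (atomize_elim, rule powr_lower_bound_from_block_inequality)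
    show "C2 * 2 powr (b + c) > 0" using C2pos by simp
    show "lam 0 \<le> tau lam k" if "1 \<le> k" for k using tau_ge_first[of lam k, OF nonneg that] .
    show "tau lam m powr a * real (j - m) powr (1 + (b + c))
        \<le> C2 * 2 powr (b + c) * tau lam (Suc j) powr (b + c)" if "1 \<le> m" "m < j" for m j
      using tau_block_bound[OF pos abc(1-3) summ bound that] tau_ge_first[of lam "Suc j"] nonneg pos[of 0]
      by (simp add: powr_mult)
  qed (use abc pos[of 0] in simp_all)
  have "C * real k powr ((b + c + 1) / (b + c - a)) \<le> tau lam (Suc k)" if "k \<ge> 1" for k
    using C[OF that] tau_mono[of lam k "Suc k"] nonneg by simp
  then show ?thesis using \<open>C > 0\<close> by blast
qed

end
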